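(* Let $L\in R[x][\partial]$ have order $r>0$. The set $I\subseteq R$ consisting of $0$ together with all contents of leading coefficients $\mathrm{lc}_\partial(T)$ of desingularized operators $T$ for $L$ is an ideal of $R$.
   Context: $R$ is a principal ideal domain with quotient field $Q_R$; $\sigma$ is an $R$-automorphism of $R[x]$ with $\sigma(x)=\gamma x+\tau$ ($\gamma$ a unit), $\delta$ an $R$-linear $\sigma$-derivation with $\deg\delta(x)\le1$; $R[x][\partial]$ is the Ore algebra with $\partial p=\sigma(p)\partial+\delta(p)$, inside $Q_R(x)[\partial]$. Each nonzero $f\in R[x]$ equals $cg$ with $c\in R$ (a content, unique up to units) and $g$ primitive. $\mathrm{cont}(L)=Q_R(x)[\partial]L\cap R[x][\partial]$. For $p\in R[x]$ dividing $\mathrm{lc}_\partial(L)$: $p$ is removable from $L$ at order $k$ if there are $P\in Q_R(x)[\partial]$ of order $k$ and $w,v\in R[x]$ with $\gcd(p,w)=1$ such that $PL\in R[x][\partial]$ and $\sigma^{-k}(\mathrm{lc}_\partial(PL))=\frac{w}{vp}\mathrm{lc}_\partial(L)$; non-removable if removable at no order. If $\mathrm{lc}_\partial(L)=c\,p_1^{e_1}\cdots p_m^{e_m}$ ($c\in R$, $p_i\in R[x]\setminus R$ irreducible and pairwise coprime), $T\in R[x][\partial]$ of order $k$ is desingularized for $L$ if $T\in\mathrm{cont}(L)$ and $\sigma^{r-k}(\mathrm{lc}_\partial(T))=\frac{a}{b\,p_1^{k_1}\cdots p_m^{k_m}}\mathrm{lc}_\partial(L)$ with $a,b\in R$, $b\ne0$,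 and $p_i^{d_i}$ non-removable from $L$ for all integers $d_i>k_i$. *)

theory Defs
  imports "HOL-Computational_Algebra.Polynomial" "HOL-Computational_Algebra.Fraction_Field"
begin

text \<open>R is a type 'a :: idom (assumed PID in the theorem); R[x] = 'a poly;
 Q_R(x) = ('a poly) fract; operators in R[x][d] are 'a poly poly (coefficient i =
 coefficient of d^i); operators in Q_R(x)[d] are 'a poly fract poly.\<close>

definition is_ideal :: "'a::comm_ring_1 set \<Rightarrow> bool" where
  "is_ideal I \<longleftrightarrow> 0 \<in> I \<and> (\<forall>a\<in>I. \<forall>b\<in>I. a + b \<in> I) \<and> (\<forall>a\<in>I. \<forall>r. r * a \<in> I)"

definition is_PID_type :: "'a::idom itself \<Rightarrow> bool" where
  "is_PID_type _ \<longleftrightarrow> (\<forall>I::'a set. is_ideal I \<longrightarrow> (\<exists>g. I = {r * g | r. True}))"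

definition primitive :: "'a::idom poly \<Rightarrow> bool" where
  "primitive g \<longleftrightarrow> g \<noteq> 0 \<and> (\<forall>d. (\<forall>i. d dvd coeff g i) \<longrightarrow> d dvd 1)"

definition fmap :: "('a::idom poly \<Rightarrow> 'a poly) \<Rightarrow> 'a poly fract \<Rightarrow> 'a poly fract" where
  "fmap g f = (case (SOME (a, b). b \<noteq> 0 \<and> f = Fract a b) of (a, b) \<Rightarrow> Fract (g a) (g b))"

definition fder :: "('a::idom poly \<Rightarrow> 'a poly) \<Rightarrow> ('a poly \<Rightarrow> 'a poly) \<Rightarrow> 'a poly fract \<Rightarrow> 'a poly fract" where
  "fder \<sigma> \<delta> f = (case (SOME (a, b). b \<noteq> 0 \<and> f = Fract a b) of (a, b) \<Rightarrow>
      Fract (\<delta> a) b - Fract (\<sigma> a * \<delta> b) (\<sigma> b * b))"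

text \<open>left multiplication by d: d (sum c_j d^j) = sum (sigma(c_j) d^(j+1) + delta(c_j) d^j)\<close>
definition dmul :: "('a::idom poly \<Rightarrow> 'a poly) \<Rightarrow> ('a poly \<Rightarrow> 'a poly) \<Rightarrow> 'a poly fract poly \<Rightarrow> 'a poly fract poly" where
  "dmul \<sigma> \<delta> P = pCons 0 (map_poly (fmap \<sigma>) P) + map_poly (fder \<sigma> \<delta>) P"

definition ore_mult :: "('a::idom poly \<Rightarrow> 'a poly) \<Rightarrow> ('a poly \<Rightarrow> 'a poly) \<Rightarrow> 'a poly fract poly \<Rightarrow> 'a poly fract poly \<Rightarrow> 'a poly fract poly" where
  "ore_mult \<sigma> \<delta> A B = (\<Sum>i\<le>degree A. smult (coeff A i) ((dmul \<sigma> \<delta> ^^ i) B))"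

definition emb :: "'a::idom poly poly \<Rightarrow> 'a poly fract poly" where
  "emb L = map_poly (\<lambda>p. Fract p 1) L"

definition spow :: "('a::idom poly \<Rightarrow> 'a poly) \<Rightarrow> int \<Rightarrow> 'a poly \<Rightarrow> 'a poly" where
  "spow \<sigma> n = (if n \<ge> 0 then \<sigma> ^^ nat n else inv \<sigma> ^^ nat (- n))"

definition in_cont :: "('a::idom poly \<Rightarrow> 'a poly) \<Rightarrow> ('a poly \<Rightarrow> 'a poly) \<Rightarrow> 'a poly poly \<Rightarrow> 'a poly poly \<Rightarrow> bool" where
  "in_cont \<sigma> \<delta> L T \<longleftrightarrow> (\<exists>P. ore_mult \<sigma> \<delta> P (emb L) = emb T)"

text \<open>gcd(p,w) = 1 in R[x]: every common divisor is a unit (library notion coprime unfolded;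
  the library constant needs a division operation on the coefficient type)\<close>
definition rel_prime :: "'a::idom poly \<Rightarrow> 'a poly \<Rightarrow> bool" where
  "rel_prime p w \<longleftrightarrow> (\<forall>d. d dvd p \<longrightarrow> d dvd w \<longrightarrow> d dvd 1)"

definition removable_at :: "('a::idom poly \<Rightarrow> 'a poly) \<Rightarrow> ('a poly \<Rightarrow> 'a poly) \<Rightarrow> 'a poly \<Rightarrow> 'a poly poly \<Rightarrow> nat \<Rightarrow> bool" where
  "removable_at \<sigma> \<delta> p L k \<longleftrightarrow> p dvd lead_coeff L \<and>
     (\<exists>P Q w v. P \<noteq> 0 \<and> degree P = k \<and> ore_mult \<sigma> \<delta> P (emb L) = emb Q \<and>
        rel_prime p w \<and> v \<noteq> 0 \<and>
        Fract (spow \<sigma> (- int k) (lead_coeff Q)) 1 = Fract w (v * p) * Fract (lead_coeff L) 1)"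

definition non_removable :: "('a::idom poly \<Rightarrow> 'a poly) \<Rightarrow> ('a poly \<Rightarrow> 'a poly) \<Rightarrow> 'a poly \<Rightarrow> 'a poly poly \<Rightarrow> bool" where
  "non_removable \<sigma> \<delta> p L \<longleftrightarrow> (\<forall>k. \<not> removable_at \<sigma> \<delta> p L k)"

text \<open>desingularized operator for L, relative to the irreducible factors ps = [p_1,...,p_m]
  of lc(L)\<close>
definition desingularized :: "('a::idom poly \<Rightarrow> 'a poly) \<Rightarrow> ('a poly \<Rightarrow> 'a poly) \<Rightarrow> 'a poly list \<Rightarrow> 'a poly poly \<Rightarrow> 'a poly poly \<Rightarrow> bool" where
  "desingularized \<sigma> \<delta> ps L T \<longleftrightarrow> T \<noteq> 0 \<and> in_cont \<sigma> \<delta> L T \<and>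
     (\<exists>a b ks. b \<noteq> 0 \<and> length ks = length ps \<and>
        Fract (spow \<sigma> (int (degree L) - int (degree T)) (lead_coeff T)) 1
          = Fract [:a:] ([:b:] * (\<Prod>i<length ps. (ps ! i) ^ (ks ! i))) * Fract (lead_coeff L) 1 \<and>
        (\<forall>i<length ps. \<forall>d. d > ks ! i \<longrightarrow> non_removable \<sigma> \<delta> ((ps ! i) ^ d) L))"

definition desing_content_set :: "('a::idom poly \<Rightarrow> 'a poly) \<Rightarrow> ('a poly \<Rightarrow> 'a poly) \<Rightarrow> 'a poly list \<Rightarrow> 'a poly poly \<Rightarrow> 'a set" where
  "desing_content_set \<sigma> \<delta> ps L = {0} \<union>
     {c. \<exists>T g. desingularized \<sigma> \<delta> ps L T \<and> primitive g \<and> lead_coeff T = smult c g}"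

end

theory Submission
  imports Defs "HOL-Computational_Algebra.Polynomial_Factorial"
begin

text \<open>All desingularized operators \<open>T\<close> of \<open>L\<close> share the same exponents \<open>k\<^sub>i\<close>: if one of
  them had a larger \<open>k\<^sub>i\<close> than another, it would itself witness that \<open>p\<^sub>i\<^sup>d\<close> is removable for a
  \<open>d\<close> that the other one declares non-removable. Hence the normalized leading coefficients
  \<open>\<sigma>\<^sup>r\<^sup>-\<^sup>k(lc(T))\<close> are all rational multiples of \<open>lc(L) / (p\<^sub>1\<^sup>k\<^sup>1 \<cdots> p\<^sub>m\<^sup>k\<^sup>m)\<close>, so by Gauss' lemma
  over the PID \<open>R\<close> their primitive parts agree up to units. Multiplying by powers of \<open>\<partial>\<close> brings
  two desingularized operators to a common order without changing this normalized coefficient,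
  and an \<open>R\<close>-linear combination of the two is then again desingularized, with content the same
  linear combination of the contents.\<close>

section \<open>Ideals in a principal ideal domain\<close>

definition coeff_ideal :: "'a::comm_ring_1 poly \<Rightarrow> 'a set" where
  "coeff_ideal f = {(\<Sum>i\<le>degree f. c i * coeff f i) | c. True}"

lemma is_ideal_coeff_ideal: "is_ideal (coeff_ideal f)"
  unfolding is_ideal_def coeff_ideal_def
proof (intro conjI ballI allI)
  show "0 \<in> {(\<Sum>i\<le>degree f. c i * coeff f i) | c. True}"
    by (auto intro!: exI[of _ "\<lambda>_. 0"])
next
  fix a b assume "a \<in> {(\<Sum>i\<le>degree f. c i * coeff f i) | c. True}"
    and "b \<in> {(\<Sum>i\<le>degree f. c i * coeff f i) | c. True}"
  then obtain c c' where "a = (\<Sum>i\<le>degree f. c i * coeff f i)" "b = (\<Sum>i\<le>degree f. c' i * coeff f i)"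
    by auto
  then have "a + b = (\<Sum>i\<le>degree f. (c i + c' i) * coeff f i)"
    by (simp add: sum.distrib distrib_right)
  then show "a + b \<in> {(\<Sum>i\<le>degree f. c i * coeff f i) | c. True}"
    by (auto intro!: exI[of _ "\<lambda>i. c i + c' i"])
next
  fix a r assume "a \<in> {(\<Sum>i\<le>degree f. c i * coeff f i) | c. True}"
  then obtain c where "a = (\<Sum>i\<le>degree f. c i * coeff f i)" by auto
  then have "r * a = (\<Sum>i\<le>degree f. (r * c i) * coeff f i)"
    by (simp add: sum_distrib_left mult.assoc)
  then show "r * a \<in> {(\<Sum>i\<le>degree f. c i * coeff f i) | c. True}"
    by (auto intro!: exI[of _ "\<lambda>i. r * c i"])
qed

lemma coeff_in_coeff_ideal: "coeff f j \<in> coeff_ideal f"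
proof (cases "j \<le> degree f")
  case True
  have "(\<Sum>i\<le>degree f. (if i = j then 1 else 0) * coeff f i)
      = (\<Sum>i\<le>degree f. if i = j then coeff f i else 0)"
    by (rule sum.cong) auto
  with True show ?thesis unfolding coeff_ideal_def
    by (auto intro!: exI[of _ "\<lambda>i. if i = j then 1 else 0"])
next
  case False
  then show ?thesis
    using is_ideal_coeff_ideal[of f] by (simp add: coeff_eq_0 is_ideal_def)
qed

lemma dvd_coeff_ideal: "(\<And>i. e dvd coeff f i) \<Longrightarrow> r \<in> coeff_ideal f \<Longrightarrow> e dvd r"
  unfolding coeff_ideal_def by (auto intro!: dvd_sum dvd_mult)

lemma is_ideal_two_generated: "is_ideal {s * q + t * x | s t. True}"
  unfolding is_ideal_def
proof (intro conjI ballI allI)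
  show "0 \<in> {s * q + t * x | s t. True}" by (auto intro!: exI[of _ 0])
next
  fix a b assume "a \<in> {s * q + t * x | s t. True}" "b \<in> {s * q + t * x | s t. True}"
  then obtain s t s' t' where "a = s * q + t * x" "b = s' * q + t' * x" by auto
  then have "a + b = (s + s') * q + (t + t') * x" by (simp add: algebra_simps)
  then show "a + b \<in> {s * q + t * x | s t. True}" by blast
next
  fix a r assume "a \<in> {s * q + t * x | s t. True}"
  then obtain s t where "a = s * q + t * x" by auto
  then have "r * a = (r * s) * q + (r * t) * x" by (simp add: algebra_simps)
  then show "r * a \<in> {s * q + t * x | s t. True}" by blast
qed

lemma is_ideal_Union_chain:
  assumes "C \<noteq> {}" "\<And>I. I \<in> C \<Longrightarrow> is_ideal I" "chain\<^sub>\<subseteq> C"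
  shows "is_ideal (\<Union>C)"
  unfolding is_ideal_def
proof (intro conjI ballI allI)
  show "0 \<in> \<Union>C" using assms(1,2) unfolding is_ideal_def by blast
next
  fix a b assume "a \<in> \<Union>C" "b \<in> \<Union>C"
  then obtain I J where IJ: "I \<in> C" "J \<in> C" "a \<in> I" "b \<in> J" by auto
  with assms(3) have "I \<subseteq> J \<or> J \<subseteq> I" unfolding chain_subset_def by blast
  with IJ assms(2) show "a + b \<in> \<Union>C" unfolding is_ideal_def by blast
next
  fix a r assume "a \<in> \<Union>C"
  with assms(2) show "r * a \<in> \<Union>C" unfolding is_ideal_def by blast
qed

lemma maximal_principal_ideal_prime:
  fixes q :: "'a::comm_ring_1"
  assumes M: "M = {r * q | r. True}" "1 \<notin> M"
    and maximal: "\<And>N. is_ideal N \<Longrightarrow> M \<subseteq> N \<Longrightarrow> 1 \<notin> N \<Longrightarrow> N = M"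
    and dvd: "q dvd x * y"
  shows "q dvd x \<or> q dvd y"
proof (rule disjCI)
  assume "\<not> q dvd y"
  define N where "N = {s * q + t * y | s t. True}"
  have "M \<subseteq> N" unfolding M N_def by (auto, metis add.right_neutral mult_zero_left)
  moreover have "y \<in> N"
  proof -
    have "y = 0 * q + 1 * y" by simp
    then show ?thesis unfolding N_def by blast
  qed
  moreover have "y \<notin> M" using \<open>\<not> q dvd y\<close> unfolding M by auto
  ultimately have "1 \<in> N"
    using maximal[of N] is_ideal_two_generated unfolding N_def by blast
  then obtain s t where st: "1 = s * q + t * y" unfolding N_def by auto
  have "x = s * x * q + t * (x * y)" by (subst mult_1_left[symmetric], subst st) (simp add: algebra_simps)
  also have "q dvd \<dots>" using dvd by simp
  finally show "q dvd x" .
qed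

lemma PID_exists_prime_elem_dvd:
  fixes d :: "'a::idom"
  assumes PID: "is_PID_type TYPE('a)" and "d \<noteq> 0" "\<not> d dvd 1"
  obtains q where "prime_elem q" "q dvd d"
proof -
  define A where "A = {I::'a set. is_ideal I \<and> d \<in> I \<and> 1 \<notin> I}"
  have "{r * d | r. True} \<in> A"
    using is_ideal_two_generated[of d 0] \<open>\<not> d dvd 1\<close> unfolding A_def
    by (auto simp: dvd_def mult.commute intro!: exI[of _ 1])
  then have "\<exists>M\<in>A. \<forall>X\<in>A. M \<subseteq> X \<longrightarrow> X = M"
  proof (intro Zorn_Lemma2 ballI)
    fix C assume "C \<in> chains A"
    then have "C \<subseteq> A" "chain\<^sub>\<subseteq> C" unfolding chains_def by auto
    then have "\<Union>C \<in> A" if "C \<noteq> {}"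
      using that is_ideal_Union_chain[of C] unfolding A_def by blast
    then show "\<exists>U\<in>A. \<forall>X\<in>C. X \<subseteq> U"
      using \<open>{r * d | r. True} \<in> A\<close> by (cases "C = {}") auto
  qed
  then obtain M where "M \<in> A" and M_max: "\<And>X. X \<in> A \<Longrightarrow> M \<subseteq> X \<Longrightarrow> X = M" by blast
  then have "is_ideal M" "d \<in> M" "1 \<notin> M" unfolding A_def by auto
  then obtain q where q: "M = {r * q | r. True}" using PID unfolding is_PID_type_def by blast
  have "q dvd d" using \<open>d \<in> M\<close> q by auto
  moreover have "prime_elem q"
    unfolding prime_elem_def
  proof (intro conjI allI impI)
    show "q \<noteq> 0" using \<open>q dvd d\<close> \<open>d \<noteq> 0\<close> by auto
    show "\<not> q dvd 1" using \<open>1 \<notin> M\<close> q by (auto simp: dvd_def mult.commute)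
    show "q dvd x \<or> q dvd y" if "q dvd x * y" for x y
      using maximal_principal_ideal_prime[OF q \<open>1 \<notin> M\<close> _ that] M_max \<open>d \<in> M\<close>
      unfolding A_def by blast
  qed
  ultimately show ?thesis using that by blast
qed

section \<open>Primitive polynomials over a principal ideal domain\<close>

lemma dvd_coeffs_imp_smult:
  fixes h :: "'a::{comm_semiring_1,semiring_no_zero_divisors} poly"
  assumes "\<And>i. d dvd coeff h i"
  obtains h' where "h = smult d h'"
  using assms const_poly_dvd_iff[of d h] by (auto elim!: dvdE)

lemma primitive_part_exists:
  fixes f :: "'a::idom poly"
  assumes PID: "is_PID_type TYPE('a)" and "f \<noteq> 0"
  obtains c g where "f = smult c g" "primitive g"
proof -
  obtain c where c: "coeff_ideal f = {r * c | r. True}"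
    using PID is_ideal_coeff_ideal[of f] unfolding is_PID_type_def by blast
  have "c dvd coeff f i" for i
    using coeff_in_coeff_ideal[of f i] c by auto
  then obtain g where g: "f = smult c g" by (rule dvd_coeffs_imp_smult)
  have "primitive g"
    unfolding primitive_def
  proof (intro conjI allI impI)
    show "g \<noteq> 0" using \<open>f \<noteq> 0\<close> g by auto
    fix d assume "\<forall>i. d dvd coeff g i"
    then have "d * c dvd coeff f i" for i using g by (simp add: mult.commute mult_dvd_mono)
    moreover have "c \<in> coeff_ideal f" using c by (auto intro!: exI[of _ 1])
    ultimately have "d * c dvd 1 * c" using dvd_coeff_ideal[of "d * c" f c] by simp
    moreover have "c \<noteq> 0" using \<open>f \<noteq> 0\<close> g by auto
    ultimately show "d dvd 1" by simp
  qed
  with g show ?thesis using that by blast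
qed

lemma primitive_dvd_mult_coeffsD:
  fixes h :: "'a::idom poly"
  assumes PID: "is_PID_type TYPE('a)" and "primitive h"
    and dvd: "\<And>i. a dvd b * coeff h i"
  shows "a dvd b"
proof -
  obtain g where g: "coeff_ideal h = {r * g | r. True}"
    using PID is_ideal_coeff_ideal[of h] unfolding is_PID_type_def by blast
  have "g dvd coeff h i" for i
    using coeff_in_coeff_ideal[of h i] g by auto
  with \<open>primitive h\<close> have "g dvd 1" unfolding primitive_def by blast
  then have "1 \<in> coeff_ideal h" using g by (auto elim!: dvdE simp: mult.commute)
  then obtain c where c: "1 = (\<Sum>i\<le>degree h. c i * coeff h i)"
    unfolding coeff_ideal_def by auto
  have "b = (\<Sum>i\<le>degree h. c i * (b * coeff h i))"
    by (subst mult_1_right[symmetric, of b], subst c) (simp add: sum_distrib_left ac_simps)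
  also have "a dvd \<dots>" by (intro dvd_sum dvd_mult dvd)
  finally show ?thesis .
qed

text \<open>Gauss' lemma: a non-unit common divisor of the coefficients of \<open>f * g\<close> has a prime
  factor in the PID, and a prime constant stays prime in the polynomial ring.\<close>
lemma primitive_mult:
  fixes f g :: "'a::idom poly"
  assumes PID: "is_PID_type TYPE('a)" and "primitive f" "primitive g"
  shows "primitive (f * g)"
  unfolding primitive_def
proof (intro conjI allI impI)
  show "f * g \<noteq> 0" using assms unfolding primitive_def by auto
  fix d assume d: "\<forall>i. d dvd coeff (f * g) i"
  show "d dvd 1"
  proof (rule ccontr)
    assume "\<not> d dvd 1"
    moreover have "d \<noteq> 0" using d \<open>f * g \<noteq> 0\<close> by (auto simp: poly_eq_iff)
    ultimately obtain q where "prime_elem q" "q dvd d"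
      using PID_exists_prime_elem_dvd[OF PID] by blast
    then have "[:q:] dvd f * g"
      using d by (auto simp: const_poly_dvd_iff intro: dvd_trans)
    then have "[:q:] dvd f \<or> [:q:] dvd g"
      using lift_prime_elem_poly[OF \<open>prime_elem q\<close>] by (simp add: prime_elem_dvd_mult_iff)
    then show False
      using assms(2,3) \<open>prime_elem q\<close> unfolding primitive_def const_poly_dvd_iff
      by (auto simp: prime_elem_not_unit)
  qed
qed

lemma primitive_power:
  fixes f :: "'a::idom poly"
  assumes PID: "is_PID_type TYPE('a)" and "primitive f"
  shows "primitive (f ^ n)"
proof (induction n)
  case 0
  then show ?case by (auto simp: primitive_def coeff_1)
next
  case (Suc n)
  then show ?case using primitive_mult[OF PID \<open>primitive f\<close>] by simp
qed

lemma irreducible_imp_primitive: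
  fixes p :: "'a::idom poly"
  assumes "irreducible p" and "degree p > 0"
  shows "primitive p"
  unfolding primitive_def
proof (intro conjI allI impI)
  show "p \<noteq> 0" using assms by auto
  fix d assume "\<forall>i. d dvd coeff p i"
  then obtain h where h: "p = smult d h" using dvd_coeffs_imp_smult by blast
  then have "[:d:] dvd 1 \<or> h dvd 1" using \<open>irreducible p\<close> by (simp add: irreducibleD)
  moreover have "\<not> h dvd 1" using h \<open>degree p > 0\<close> by (auto simp: is_unit_poly_iff split: if_splits)
  ultimately show "d dvd 1" by (simp add: is_unit_const_poly_iff)
qed

lemma primitive_dvd_smult_cancel:
  fixes p f :: "'a::idom poly"
  assumes PID: "is_PID_type TYPE('a)" and "primitive p" "a \<noteq> 0" and "p dvd smult a f"
  shows "p dvd f"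
proof (cases "f = 0")
  case False
  obtain g where g: "smult a f = p * g" using \<open>p dvd smult a f\<close> by (auto elim: dvdE)
  with False \<open>a \<noteq> 0\<close> have "g \<noteq> 0" by auto
  then obtain c g' where cg: "g = smult c g'" "primitive g'" by (rule primitive_part_exists[OF PID])
  have eq: "smult a f = smult c (p * g')" using g cg by simp
  have "a dvd c * coeff (p * g') i" for i
    using arg_cong[OF eq, of "\<lambda>q. coeff q i"] by (metis coeff_smult dvd_triv_left)
  then have "a dvd c" using primitive_dvd_mult_coeffsD[OF PID primitive_mult[OF PID \<open>primitive p\<close> cg(2)]]
    by blast
  then obtain c' where "c = a * c'" by (auto elim: dvdE)
  with eq \<open>a \<noteq> 0\<close> have "f = p * smult c' g'" by (simp add: smult_cancel)
  then show ?thesis by (rule dvdI)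
qed simp

lemma rel_prime_primitive_const:
  fixes q :: "'a::idom poly"
  assumes "primitive q" "a \<noteq> 0"
  shows "rel_prime q [:a:]"
  unfolding rel_prime_def
proof (intro allI impI)
  fix e assume "e dvd q" "e dvd [:a:]"
  then have "degree e = 0" using \<open>a \<noteq> 0\<close> by (metis degree_pCons_0 dvd_imp_degree_le le_zero_eq pCons_eq_0_iff)
  then obtain e0 where e0: "e = [:e0:]" by (rule degree_eq_zeroE)
  with \<open>e dvd q\<close> have "e0 dvd 1" using \<open>primitive q\<close> by (simp add: primitive_def const_poly_dvd_iff)
  then show "e dvd 1" using e0 by (simp add: is_unit_const_poly_iff)
qed

lemma primitive_smult_eq_imp_unit:
  fixes g h :: "'a::idom poly"
  assumes PID: "is_PID_type TYPE('a)" and "primitive g" "primitive h"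
    and "x \<noteq> 0" "y \<noteq> 0" and eq: "smult x g = smult y h"
  obtains u where "u dvd 1" "h = smult u g"
proof -
  have c: "x * coeff g i = y * coeff h i" for i using arg_cong[OF eq, of "\<lambda>q. coeff q i"] by simp
  have "y dvd x" using primitive_dvd_mult_coeffsD[OF PID \<open>primitive g\<close>, of y x] c by simp
  then obtain u where u: "x = y * u" by (auto elim: dvdE)
  have "x dvd y" using primitive_dvd_mult_coeffsD[OF PID \<open>primitive h\<close>, of x y] c
    by (metis dvd_triv_left)
  then obtain v where v: "y = x * v" by (auto elim: dvdE)
  from u v \<open>y \<noteq> 0\<close> have "u * v = 1" by (metis mult.assoc mult_cancel_left1 mult.commute)
  then have "u dvd 1" by (metis dvd_triv_left)
  moreover have "h = smult u g" using eq u \<open>y \<noteq> 0\<close> by (simp add: smult_cancel)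
  ultimately show ?thesis using that by blast
qed

lemma inv_smult_commute:
  assumes "bij \<phi>" and "\<And>d h. \<phi> (smult d h) = smult d (\<phi> h)"
  shows "inv \<phi> (smult d h) = smult d (inv \<phi> h)"
proof -
  have "\<phi> (smult d (inv \<phi> h)) = smult d h"
    using assms by (simp add: bij_is_surj surj_f_inv_f)
  then show ?thesis using bij_inv_eq_iff[OF \<open>bij \<phi>\<close>] by metis
qed

lemma primitive_bij_smult_commute:
  assumes "bij \<phi>" and smult: "\<And>d h. \<phi> (smult d h) = smult d (\<phi> h)"
    and "primitive g"
  shows "primitive (\<phi> g)"
  unfolding primitive_def
proof (intro conjI allI impI)
  have "\<phi> 0 = 0" using smult[of 0 0] by simp
  then show "\<phi> g \<noteq> 0"
    using \<open>primitive g\<close> bij_is_inj[OF \<open>bij \<phi>\<close>] unfolding primitive_def by (metis injD)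
  fix d assume "\<forall>i. d dvd coeff (\<phi> g) i"
  then obtain h where "\<phi> g = smult d h" using dvd_coeffs_imp_smult by blast
  then have "g = smult d (inv \<phi> h)"
    using inv_smult_commute[OF assms(1,2)] bij_is_inj[OF \<open>bij \<phi>\<close>] by (metis inv_f_f)
  then show "d dvd 1" using \<open>primitive g\<close> unfolding primitive_def by simp
qed

section \<open>The Ore algebra and its extension to the field of fractions\<close>

lemma case_some_Fract_rep:
  fixes a b :: "'a::idom"
  assumes "b \<noteq> 0" and "\<And>a' b'. b' \<noteq> 0 \<Longrightarrow> Fract a b = Fract a' b' \<Longrightarrow> F a' b' = F a b"
  shows "(case SOME (a', b'). b' \<noteq> 0 \<and> Fract a b = Fract a' b' of (a', b') \<Rightarrow> F a' b') = F a b"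
proof -
  have "\<exists>x. (\<lambda>(a', b'). b' \<noteq> 0 \<and> Fract a b = Fract a' b') x"
    using \<open>b \<noteq> 0\<close> by auto
  from someI_ex[OF this] show ?thesis
    using assms(2) by (auto split: prod.split)
qed

text \<open>In the three field identities below \<open>sx\<close> and \<open>dx\<close> stand for \<open>\<sigma>(x)\<close> and \<open>\<delta>(x)\<close>.\<close>

lemma quotient_rule_cancel:
  fixes a b c da db dc sa sb sc :: "'b::field"
  assumes "b \<noteq> 0" "c \<noteq> 0" "sb \<noteq> 0" "sc \<noteq> 0"
  shows "(sa * dc + da * c) / (b * c) - (sa * sc) * (sb * dc + db * c) / ((sb * sc) * (b * c))
       = da / b - sa * db / (sb * b)"
  using assms by (simp add: field_simps)

lemma quotient_rule_add:
  fixes b e da db dc de sa sb sc se :: "'b::field"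
  assumes "b \<noteq> 0" "e \<noteq> 0" "sb \<noteq> 0" "se \<noteq> 0"
    and commute: "(sb - b) * de = (se - e) * db"
  shows "(sa * de + da * e + (sc * db + dc * b)) / (b * e)
     - (sa * se + sc * sb) * (sb * de + db * e) / ((sb * se) * (b * e))
     = (da / b - sa * db / (sb * b)) + (dc / e - sc * de / (se * e))"
proof -
  have "sb * de = b * de + (se - e) * db" using commute by (simp add: algebra_simps)
  then show ?thesis using assms by (simp add: field_simps) algebra
qed

lemma quotient_rule_mult:
  fixes b c e da db dc de sa sb sc se :: "'b::field"
  assumes "b \<noteq> 0" "e \<noteq> 0" "sb \<noteq> 0" "se \<noteq> 0"
    and commute: "(sb - b) * de = (se - e) * db" "(sb - b) * dc = (sc - c) * db"
  shows "(sa * dc + da * c) / (b * e) - (sa * sc) * (sb * de + db * e) / ((sb * se) * (b * e))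
     = (sa / sb) * (dc / e - sc * de / (se * e)) + (da / b - sa * db / (sb * b)) * (c / e)"
proof -
  have "sb * de = b * de + (se - e) * db" "sb * dc = b * dc + (sc - c) * db"
    using commute by (simp_all add: algebra_simps)
  then show ?thesis using assms by (simp add: field_simps) algebra
qed

locale ore_algebra =
  fixes \<gamma> \<tau> :: "'a::idom" and \<sigma> \<delta> :: "'a poly \<Rightarrow> 'a poly"
  assumes unit: "\<gamma> dvd 1"
    and sigma: "\<And>p. \<sigma> p = pcompose p [:\<tau>, \<gamma>:]"
    and delta_add: "\<And>p q. \<delta> (p + q) = \<delta> p + \<delta> q"
    and delta_mult: "\<And>p q. \<delta> (p * q) = \<sigma> p * \<delta> q + \<delta> p * q"
begin

lemma sigma_add: "\<sigma> (p + q) = \<sigma> p + \<sigma> q"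
  by (simp add: sigma pcompose_add)

lemma sigma_mult: "\<sigma> (p * q) = \<sigma> p * \<sigma> q"
  by (simp add: sigma pcompose_mult)

lemma sigma_smult: "\<sigma> (smult a p) = smult a (\<sigma> p)"
  by (simp add: sigma pcompose_smult)

lemma sigma_0: "\<sigma> 0 = 0"
  by (simp add: sigma)

lemma sigma_1: "\<sigma> 1 = 1"
  by (simp add: sigma pcompose_1)

lemma bij_sigma: "bij \<sigma>"
proof -
  obtain g where g: "\<gamma> * g = 1" using unit by (metis dvdE)
  define \<rho> where "\<rho> p = pcompose p [:- \<tau> * g, g:]" for p :: "'a poly"
  have "pcompose [:\<tau>, \<gamma>:] [:- \<tau> * g, g:] = [:0, 1:]" "pcompose [:- \<tau> * g, g:] [:\<tau>, \<gamma>:] = [:0, 1:]"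
    using g by (simp_all add: pcompose_pCons algebra_simps)
  then have "\<rho> \<circ> \<sigma> = id" "\<sigma> \<circ> \<rho> = id"
    by (simp_all add: fun_eq_iff \<rho>_def sigma pcompose_assoc[symmetric])
  then show ?thesis by (rule o_bij)
qed

lemma sigma_eq_0_iff: "\<sigma> p = 0 \<longleftrightarrow> p = 0"
  using bij_is_inj[OF bij_sigma] sigma_0 by (metis injD)

lemma sigma_pow_smult: "(\<sigma> ^^ n) (smult a p) = smult a ((\<sigma> ^^ n) p)"
  by (induction n) (simp_all add: sigma_smult)

lemma inv_sigma_pow_smult: "(inv \<sigma> ^^ n) (smult a p) = smult a ((inv \<sigma> ^^ n) p)"
  by (induction n) (simp_all add: inv_smult_commute[OF bij_sigma sigma_smult])

lemma inv_sigma_pow_sigma_pow: "(inv \<sigma> ^^ n) ((\<sigma> ^^ n) p) = p"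
  using inv_fn_o_fn_is_id[OF bij_sigma, of n] by (simp add: fun_eq_iff)

lemma sigma_pow_inv_sigma_pow: "(\<sigma> ^^ n) ((inv \<sigma> ^^ n) p) = p"
  using fn_o_inv_fn_is_id[OF bij_sigma, of n] by (simp add: fun_eq_iff)

lemma inv_sigma_pow_eq_0_iff: "(inv \<sigma> ^^ n) p = 0 \<longleftrightarrow> p = 0"
  by (metis inv_sigma_pow_smult sigma_pow_inv_sigma_pow smult_0_left)

lemma primitive_sigma_pow: "primitive g \<Longrightarrow> primitive ((\<sigma> ^^ n) g)"
  by (rule primitive_bij_smult_commute) (simp_all add: bij_sigma sigma_pow_smult)

lemma primitive_inv_sigma_pow: "primitive g \<Longrightarrow> primitive ((inv \<sigma> ^^ n) g)"
  by (rule primitive_bij_smult_commute) (simp_all add: bij_sigma bij_imp_bij_inv inv_sigma_pow_smult)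

lemma delta_0: "\<delta> 0 = 0"
proof -
  have "\<delta> 0 + \<delta> 0 = \<delta> 0 + 0" using delta_add[of 0 0] by simp
  then show ?thesis by (rule add_left_imp_eq)
qed

lemma delta_1: "\<delta> 1 = 0"
proof -
  have "\<delta> 1 + \<delta> 1 = \<delta> 1 + 0" using delta_mult[of 1 1] by (simp add: sigma_1)
  then show ?thesis by (rule add_left_imp_eq)
qed

lemma delta_commute: "(\<sigma> p - p) * \<delta> q = (\<sigma> q - q) * \<delta> p"
  using delta_mult[of p q] delta_mult[of q p] by (simp add: algebra_simps)

lemma fmap_Fract: "b \<noteq> 0 \<Longrightarrow> fmap \<sigma> (Fract a b) = Fract (\<sigma> a) (\<sigma> b)"
  unfolding fmap_def
proof (rule case_some_Fract_rep)
  fix a' b' assume "b \<noteq> 0" "b' \<noteq> 0" "Fract a b = Fract a' b'"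
  then have "a' * b = a * b'" by (simp add: eq_fract)
  then have "\<sigma> a' * \<sigma> b = \<sigma> a * \<sigma> b'" by (metis sigma_mult)
  then show "Fract (\<sigma> a') (\<sigma> b') = Fract (\<sigma> a) (\<sigma> b)"
    using \<open>b \<noteq> 0\<close> \<open>b' \<noteq> 0\<close> by (simp add: eq_fract sigma_eq_0_iff)
qed

lemma fmap_to_fract: "fmap \<sigma> (to_fract p) = to_fract (\<sigma> p)"
  by (simp add: to_fract_def fmap_Fract sigma_1)

lemma fmap_0: "fmap \<sigma> 0 = 0"
  using fmap_to_fract[of 0] by (simp add: sigma_0)

lemma fmap_add: "fmap \<sigma> (x + y) = fmap \<sigma> x + fmap \<sigma> y"
  by (cases x, cases y) (simp add: fmap_Fract sigma_add sigma_mult sigma_eq_0_iff)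

lemma fmap_mult: "fmap \<sigma> (x * y) = fmap \<sigma> x * fmap \<sigma> y"
  by (cases x, cases y) (simp add: fmap_Fract sigma_mult sigma_eq_0_iff)

lemma fmap_eq_0_iff: "fmap \<sigma> x = 0 \<longleftrightarrow> x = 0"
  by (cases x) (simp add: fmap_Fract sigma_eq_0_iff Zero_fract_def eq_fract)

definition quotient_delta :: "'a poly \<Rightarrow> 'a poly \<Rightarrow> 'a poly fract" where
  "quotient_delta a b = to_fract (\<delta> a) / to_fract b
     - to_fract (\<sigma> a) * to_fract (\<delta> b) / (to_fract (\<sigma> b) * to_fract b)"

lemma quotient_delta_cancel:
  assumes "b \<noteq> 0" "c \<noteq> 0"
  shows "quotient_delta (a * c) (b * c) = quotient_delta a b"
  unfolding quotient_delta_def delta_mult sigma_mult to_fract_mult to_fract_add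
  by (rule quotient_rule_cancel) (use assms in \<open>simp_all add: sigma_eq_0_iff\<close>)

lemma fder_Fract:
  assumes "b \<noteq> 0"
  shows "fder \<sigma> \<delta> (Fract a b) = quotient_delta a b"
proof -
  have body: "Fract (\<delta> a) b - Fract (\<sigma> a * \<delta> b) (\<sigma> b * b) = quotient_delta a b" for a b
    by (simp add: quotient_delta_def Fract_conv_to_fract)
  have "fder \<sigma> \<delta> (Fract a b)
      = (case SOME (a', b'). b' \<noteq> 0 \<and> Fract a b = Fract a' b' of (a', b') \<Rightarrow> quotient_delta a' b')"
    unfolding fder_def body ..
  also have "\<dots> = quotient_delta a b"
  proof (rule case_some_Fract_rep[OF assms])
    fix a' b' assume "b' \<noteq> 0" "Fract a b = Fract a' b'"
    then have "a' * b = a * b'" using assms by (simp add: eq_fract)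
    have "quotient_delta a' b' = quotient_delta (a' * b) (b' * b)"
      using assms \<open>b' \<noteq> 0\<close> by (simp add: quotient_delta_cancel)
    also have "\<dots> = quotient_delta (a * b') (b * b')"
      by (simp add: \<open>a' * b = a * b'\<close> mult.commute)
    also have "\<dots> = quotient_delta a b"
      using assms \<open>b' \<noteq> 0\<close> by (simp add: quotient_delta_cancel)
    finally show "quotient_delta a' b' = quotient_delta a b" .
  qed
  finally show ?thesis .
qed

lemma fder_to_fract: "fder \<sigma> \<delta> (to_fract p) = to_fract (\<delta> p)"
  by (simp add: to_fract_def fder_Fract quotient_delta_def delta_1 sigma_1)

lemma fder_0: "fder \<sigma> \<delta> 0 = 0"
  using fder_to_fract[of 0] by (simp add: delta_0)

lemma to_fract_delta_commute:
  "(to_fract (\<sigma> b) - to_fract b) * to_fract (\<delta> e) = (to_fract (\<sigma> e) - to_fract e) * to_fract (\<delta> b)"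
  using arg_cong[OF delta_commute[of b e], of to_fract] by simp

lemma fder_add: "fder \<sigma> \<delta> (x + y) = fder \<sigma> \<delta> x + fder \<sigma> \<delta> y"
proof (cases x, cases y)
  fix a b c e assume x: "x = Fract a b" "b \<noteq> 0" and y: "y = Fract c e" "e \<noteq> 0"
  have "fder \<sigma> \<delta> (x + y) = quotient_delta (a * e + c * b) (b * e)"
    using x y by (simp add: fder_Fract)
  also have "\<dots> = quotient_delta a b + quotient_delta c e"
    unfolding quotient_delta_def delta_add delta_mult sigma_add sigma_mult to_fract_mult to_fract_add
    by (rule quotient_rule_add) (use x y in \<open>simp_all add: sigma_eq_0_iff to_fract_delta_commute\<close>)
  finally show ?thesis using x y by (simp add: fder_Fract)
qed

lemma fder_mult: "fder \<sigma> \<delta> (x * y) = fmap \<sigma> x * fder \<sigma> \<delta> y + fder \<sigma> \<delta> x * y"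
proof (cases x, cases y)
  fix a b c e assume x: "x = Fract a b" "b \<noteq> 0" and y: "y = Fract c e" "e \<noteq> 0"
  have "fder \<sigma> \<delta> (x * y) = quotient_delta (a * c) (b * e)"
    using x y by (simp add: fder_Fract)
  also have "\<dots> = (to_fract (\<sigma> a) / to_fract (\<sigma> b)) * quotient_delta c e
      + quotient_delta a b * (to_fract c / to_fract e)"
    unfolding quotient_delta_def delta_mult sigma_mult to_fract_mult to_fract_add
    by (rule quotient_rule_mult) (use x y in \<open>simp_all add: sigma_eq_0_iff to_fract_delta_commute\<close>)
  also have "\<dots> = fmap \<sigma> (Fract a b) * fder \<sigma> \<delta> (Fract c e) + fder \<sigma> \<delta> (Fract a b) * Fract c e"
    by (simp only: fder_Fract[OF x(2)] fder_Fract[OF y(2)] fmap_Fract[OF x(2)])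
      (simp add: Fract_conv_to_fract)
  finally show ?thesis by (simp only: x(1) y(1))
qed

lemma coeff_dmul:
  "coeff (dmul \<sigma> \<delta> X) n = (if n = 0 then 0 else fmap \<sigma> (coeff X (n - 1))) + fder \<sigma> \<delta> (coeff X n)"
  by (cases n) (simp_all add: dmul_def coeff_map_poly fmap_0 fder_0)

lemma dmul_0: "dmul \<sigma> \<delta> 0 = 0"
  by (simp add: poly_eq_iff coeff_dmul fmap_0 fder_0)

lemma dmul_add: "dmul \<sigma> \<delta> (X + Y) = dmul \<sigma> \<delta> X + dmul \<sigma> \<delta> Y"
  by (simp add: poly_eq_iff coeff_dmul fmap_add fder_add algebra_simps)

lemma dmul_sum: "dmul \<sigma> \<delta> (sum f A) = (\<Sum>x\<in>A. dmul \<sigma> \<delta> (f x))"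
  by (induction A rule: infinite_finite_induct) (simp_all add: dmul_0 dmul_add)

lemma dmul_smult:
  "dmul \<sigma> \<delta> (smult a X) = smult (fmap \<sigma> a) (dmul \<sigma> \<delta> X) + smult (fder \<sigma> \<delta> a) X"
  by (simp add: poly_eq_iff coeff_dmul fmap_mult fder_mult algebra_simps fmap_0)

lemma degree_dmul_le: "degree (dmul \<sigma> \<delta> X) \<le> Suc (degree X)"
  by (rule degree_le) (auto simp: coeff_dmul coeff_eq_0 fmap_0 fder_0)

lemma degree_dmul:
  assumes "X \<noteq> 0"
  shows "degree (dmul \<sigma> \<delta> X) = Suc (degree X)"
    and "lead_coeff (dmul \<sigma> \<delta> X) = fmap \<sigma> (lead_coeff X)"
proof -
  have lc: "coeff (dmul \<sigma> \<delta> X) (Suc (degree X)) = fmap \<sigma> (lead_coeff X)"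
    by (simp add: coeff_dmul coeff_eq_0 fder_0)
  moreover have "fmap \<sigma> (lead_coeff X) \<noteq> 0" using assms by (simp add: fmap_eq_0_iff)
  ultimately have "Suc (degree X) \<le> degree (dmul \<sigma> \<delta> X)" by (simp add: le_degree)
  then show "degree (dmul \<sigma> \<delta> X) = Suc (degree X)" using degree_dmul_le by (rule antisym[rotated])
  with lc show "lead_coeff (dmul \<sigma> \<delta> X) = fmap \<sigma> (lead_coeff X)" by simp
qed

lemma degree_dmul_pow:
  assumes "X \<noteq> 0"
  shows "(dmul \<sigma> \<delta> ^^ i) X \<noteq> 0 \<and> degree ((dmul \<sigma> \<delta> ^^ i) X) = degree X + i"
proof (induction i)
  case (Suc i)
  then show ?case using degree_dmul(1)[of "(dmul \<sigma> \<delta> ^^ i) X"] by auto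
qed (simp add: assms)

lemma ore_mult_eq_sum:
  assumes "degree A \<le> N"
  shows "ore_mult \<sigma> \<delta> A B = (\<Sum>i\<le>N. smult (coeff A i) ((dmul \<sigma> \<delta> ^^ i) B))"
  unfolding ore_mult_def
  by (rule sum.mono_neutral_left) (use assms in \<open>auto simp: coeff_eq_0\<close>)

lemma ore_mult_0: "ore_mult \<sigma> \<delta> 0 B = 0"
  by (simp add: ore_mult_def)

lemma ore_mult_add: "ore_mult \<sigma> \<delta> (A + A') B = ore_mult \<sigma> \<delta> A B + ore_mult \<sigma> \<delta> A' B"
proof -
  define N where "N = max (degree A) (degree A')"
  have "degree (A + A') \<le> N" unfolding N_def by (rule degree_add_le) auto
  then show ?thesis
    by (simp add: ore_mult_eq_sum[of _ N] N_def smult_add_left sum.distrib)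
qed

lemma ore_mult_smult: "ore_mult \<sigma> \<delta> (smult a A) B = smult a (ore_mult \<sigma> \<delta> A B)"
  by (simp add: ore_mult_eq_sum[OF degree_smult_le] ore_mult_def poly_eq_iff coeff_sum sum_distrib_left mult.assoc)

lemma ore_mult_dmul: "ore_mult \<sigma> \<delta> (dmul \<sigma> \<delta> A) B = dmul \<sigma> \<delta> (ore_mult \<sigma> \<delta> A B)"
proof -
  define N where "N = degree A"
  define D where "D i = (dmul \<sigma> \<delta> ^^ i) B" for i
  have "ore_mult \<sigma> \<delta> (dmul \<sigma> \<delta> A) B = (\<Sum>i\<le>Suc N. smult (coeff (dmul \<sigma> \<delta> A) i) (D i))"
    unfolding D_def N_def by (rule ore_mult_eq_sum[OF degree_dmul_le])
  also have "\<dots> = (\<Sum>i\<le>Suc N. smult (if i = 0 then 0 else fmap \<sigma> (coeff A (i - 1))) (D i))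
      + (\<Sum>i\<le>Suc N. smult (fder \<sigma> \<delta> (coeff A i)) (D i))"
    by (simp add: coeff_dmul smult_add_left sum.distrib)
  also have "(\<Sum>i\<le>Suc N. smult (if i = 0 then 0 else fmap \<sigma> (coeff A (i - 1))) (D i))
      = (\<Sum>i\<le>N. smult (fmap \<sigma> (coeff A i)) (D (Suc i)))"
    by (subst sum.atMost_Suc_shift) simp
  also have "(\<Sum>i\<le>Suc N. smult (fder \<sigma> \<delta> (coeff A i)) (D i)) = (\<Sum>i\<le>N. smult (fder \<sigma> \<delta> (coeff A i)) (D i))"
    by (simp add: N_def coeff_eq_0 fder_0)
  also have "(\<Sum>i\<le>N. smult (fmap \<sigma> (coeff A i)) (D (Suc i))) + (\<Sum>i\<le>N. smult (fder \<sigma> \<delta> (coeff A i)) (D i))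
      = dmul \<sigma> \<delta> (ore_mult \<sigma> \<delta> A B)"
    by (simp add: ore_mult_def N_def D_def dmul_sum dmul_smult sum.distrib)
  finally show ?thesis .
qed

lemma degree_ore_mult:
  assumes "P \<noteq> 0" "B \<noteq> 0"
  shows "degree (ore_mult \<sigma> \<delta> P B) = degree P + degree B"
proof -
  define d where "d = degree P"
  define f where "f i = smult (coeff P i) ((dmul \<sigma> \<delta> ^^ i) B)" for i
  have deg_f: "degree (f i) \<le> i + degree B" for i
    unfolding f_def using degree_smult_le degree_dmul_pow[OF \<open>B \<noteq> 0\<close>, of i] by (metis add.commute)
  have "degree (\<Sum>i\<le>d. f i) \<le> d + degree B"
    by (rule degree_sum_le) (auto intro: order_trans[OF deg_f])
  moreover have "coeff (\<Sum>i\<le>d. f i) (d + degree B) = coeff P d * lead_coeff ((dmul \<sigma> \<delta> ^^ d) B)"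
  proof -
    have "coeff (f i) (d + degree B) = 0" if "i < d" for i
      using deg_f[of i] that by (simp add: coeff_eq_0)
    then have "coeff (\<Sum>i\<le>d. f i) (d + degree B) = coeff (f d) (d + degree B)"
      unfolding coeff_sum by (simp add: sum.atMost_Suc_shift[symmetric] lessThan_Suc_atMost[symmetric])
    then show ?thesis
      using degree_dmul_pow[OF \<open>B \<noteq> 0\<close>, of d] by (simp add: f_def add.commute)
  qed
  moreover have "(dmul \<sigma> \<delta> ^^ d) B \<noteq> 0"
    using degree_dmul_pow[OF \<open>B \<noteq> 0\<close>] by blast
  ultimately have "degree (\<Sum>i\<le>d. f i) = d + degree B"
    using \<open>P \<noteq> 0\<close> by (simp add: d_def le_degree antisym)
  then show ?thesis by (simp add: d_def ore_mult_def f_def)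
qed

lemma emb_conv_fract_poly: "emb T = fract_poly T"
  by (simp add: emb_def to_fract_def[abs_def])

lemma degree_fract_poly: "degree (fract_poly T) = degree T"
  by (rule degree_map_poly) simp

lemma lead_coeff_fract_poly: "lead_coeff (fract_poly T) = to_fract (lead_coeff T)"
  by (simp add: coeff_map_poly degree_fract_poly)

definition dmul_poly :: "'a poly poly \<Rightarrow> 'a poly poly" where
  "dmul_poly T = pCons 0 (map_poly \<sigma> T) + map_poly \<delta> T"

lemma fract_poly_dmul_poly: "fract_poly (dmul_poly T) = dmul \<sigma> \<delta> (fract_poly T)"
proof (rule poly_eqI)
  fix n show "coeff (fract_poly (dmul_poly T)) n = coeff (dmul \<sigma> \<delta> (fract_poly T)) n"
    by (cases n) (simp_all add: dmul_poly_def coeff_dmul coeff_map_poly fmap_to_fract fder_to_fract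
        sigma_0 delta_0)
qed

lemma dmul_poly:
  assumes "T \<noteq> 0"
  shows "degree (dmul_poly T) = Suc (degree T)" and "lead_coeff (dmul_poly T) = \<sigma> (lead_coeff T)"
proof -
  have "fract_poly T \<noteq> 0" using assms by simp
  note dmul = degree_dmul[OF this, folded fract_poly_dmul_poly]
  from dmul(1) show "degree (dmul_poly T) = Suc (degree T)" by (simp add: degree_fract_poly)
  from dmul(2) show "lead_coeff (dmul_poly T) = \<sigma> (lead_coeff T)"
    by (simp add: lead_coeff_fract_poly fmap_to_fract)
qed

lemma dmul_poly_pow:
  assumes "T \<noteq> 0"
  shows "degree ((dmul_poly ^^ j) T) = degree T + j"
    and "lead_coeff ((dmul_poly ^^ j) T) = (\<sigma> ^^ j) (lead_coeff T)"
proof -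
  have "(dmul_poly ^^ j) T \<noteq> 0 \<and> degree ((dmul_poly ^^ j) T) = degree T + j
      \<and> lead_coeff ((dmul_poly ^^ j) T) = (\<sigma> ^^ j) (lead_coeff T)"
  proof (induction j)
    case (Suc j)
    then show ?case using dmul_poly[of "(dmul_poly ^^ j) T"] by auto
  qed (simp add: assms)
  then show "degree ((dmul_poly ^^ j) T) = degree T + j"
    and "lead_coeff ((dmul_poly ^^ j) T) = (\<sigma> ^^ j) (lead_coeff T)" by blast+
qed

lemma in_cont_add: "in_cont \<sigma> \<delta> L T \<Longrightarrow> in_cont \<sigma> \<delta> L T' \<Longrightarrow> in_cont \<sigma> \<delta> L (T + T')"
  unfolding in_cont_def emb_conv_fract_poly by (metis ore_mult_add fract_poly_add)

lemma in_cont_smult: "in_cont \<sigma> \<delta> L T \<Longrightarrow> in_cont \<sigma> \<delta> L (smult c T)"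
  unfolding in_cont_def emb_conv_fract_poly by (metis ore_mult_smult fract_poly_smult)

lemma in_cont_dmul_poly_pow: "in_cont \<sigma> \<delta> L T \<Longrightarrow> in_cont \<sigma> \<delta> L ((dmul_poly ^^ j) T)"
proof (induction j)
  case (Suc j)
  then show ?case
    unfolding in_cont_def emb_conv_fract_poly by (metis ore_mult_dmul fract_poly_dmul_poly funpow.simps(2) o_apply)
qed simp

lemma in_cont_cofactor:
  assumes "in_cont \<sigma> \<delta> L T" "L \<noteq> 0" "T \<noteq> 0"
  obtains P where "P \<noteq> 0" "ore_mult \<sigma> \<delta> P (emb L) = emb T" "degree T = degree P + degree L"
proof -
  obtain P where P: "ore_mult \<sigma> \<delta> P (emb L) = emb T"
    using assms(1) unfolding in_cont_def by blast
  with \<open>T \<noteq> 0\<close> have "P \<noteq> 0" by (auto simp: ore_mult_0 emb_conv_fract_poly)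
  with P have "degree T = degree P + degree L"
    using degree_ore_mult[of P "emb L"] \<open>L \<noteq> 0\<close> by (simp add: emb_conv_fract_poly degree_fract_poly)
  with P \<open>P \<noteq> 0\<close> show ?thesis using that by blast
qed

end

section \<open>Desingularized operators\<close>

lemma spow_minus_nat: "spow \<sigma> (- int m) = inv \<sigma> ^^ m"
  by (cases "m = 0") (simp_all add: spow_def)

locale desingularization = ore_algebra +
  fixes L :: "'a poly poly" and ps :: "'a poly list"
  assumes PID: "is_PID_type TYPE('a)"
    and L_nonzero: "L \<noteq> 0"
    and primitive_factor: "\<And>i. i < length ps \<Longrightarrow> primitive (ps ! i)"
begin

definition factor_prod :: "nat list \<Rightarrow> 'a poly" where
  "factor_prod ks = (\<Prod>i<length ps. (ps ! i) ^ (ks ! i))"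

text \<open>The paper's \<open>\<sigma>\<^sup>r\<^sup>-\<^sup>k(lc(T))\<close>; for \<open>T \<in> cont(L)\<close> the order \<open>k\<close> is at least
  \<open>r\<close>, so the truncated subtraction is harmless.\<close>
definition normalized_lc :: "'a poly poly \<Rightarrow> 'a poly" where
  "normalized_lc T = (inv \<sigma> ^^ (degree T - degree L)) (lead_coeff T)"

definition desingularized_with :: "'a poly poly \<Rightarrow> nat list \<Rightarrow> bool" where
  "desingularized_with T ks \<longleftrightarrow> T \<noteq> 0 \<and> in_cont \<sigma> \<delta> L T \<and> length ks = length ps \<and>
     (\<exists>a b. b \<noteq> 0 \<and> normalized_lc T * smult b (factor_prod ks) = smult a (lead_coeff L)) \<and>
     (\<forall>i<length ps. \<forall>d>ks ! i. non_removable \<sigma> \<delta> ((ps ! i) ^ d) L)"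

lemma factor_prod_nonzero: "factor_prod ks \<noteq> 0"
  using primitive_factor unfolding factor_prod_def primitive_def by auto

lemma normalized_lc_nonzero: "T \<noteq> 0 \<Longrightarrow> normalized_lc T \<noteq> 0"
  by (simp add: normalized_lc_def inv_sigma_pow_eq_0_iff)

lemma degree_L_le: "in_cont \<sigma> \<delta> L T \<Longrightarrow> T \<noteq> 0 \<Longrightarrow> degree L \<le> degree T"
  using in_cont_cofactor L_nonzero by (metis le_add2)

lemma lead_coeff_conv_normalized_lc:
  "in_cont \<sigma> \<delta> L T \<Longrightarrow> T \<noteq> 0 \<Longrightarrow> lead_coeff T = (\<sigma> ^^ (degree T - degree L)) (normalized_lc T)"
  by (simp add: normalized_lc_def sigma_pow_inv_sigma_pow)

lemma desingularized_withE:
  assumes "desingularized_with T ks"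
  obtains a b where "a \<noteq> 0" "b \<noteq> 0"
    "normalized_lc T * smult b (factor_prod ks) = smult a (lead_coeff L)"
proof -
  obtain a b where "b \<noteq> 0" and data: "normalized_lc T * smult b (factor_prod ks) = smult a (lead_coeff L)"
    and "T \<noteq> 0"
    using assms unfolding desingularized_with_def by blast
  moreover have "a \<noteq> 0"
    using data \<open>b \<noteq> 0\<close> normalized_lc_nonzero[OF \<open>T \<noteq> 0\<close>] factor_prod_nonzero[of ks]
    by (auto simp: L_nonzero)
  ultimately show ?thesis using that by blast
qed

lemma desingularized_iff: "desingularized \<sigma> \<delta> ps L T \<longleftrightarrow> (\<exists>ks. desingularized_with T ks)"
proof -
  have eq_iff: "Fract (spow \<sigma> (int (degree L) - int (degree T)) (lead_coeff T)) 1
      = Fract [:a:] ([:b:] * factor_prod ks) * Fract (lead_coeff L) 1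
      \<longleftrightarrow> normalized_lc T * smult b (factor_prod ks) = smult a (lead_coeff L)"
    if "in_cont \<sigma> \<delta> L T" "T \<noteq> 0" "b \<noteq> 0" for a b ks
  proof -
    have "spow \<sigma> (int (degree L) - int (degree T)) = inv \<sigma> ^^ (degree T - degree L)"
      using spow_minus_nat[where m = "degree T - degree L"] degree_L_le[OF that(1,2)] by (simp add: of_nat_diff)
    then show ?thesis
      using that(3) factor_prod_nonzero by (simp add: eq_fract normalized_lc_def)
  qed
  show ?thesis
    unfolding desingularized_def desingularized_with_def factor_prod_def[symmetric]
    by (rule iffI; elim exE conjE; use eq_iff in blast)
qed

lemma removable_at_exponent:
  assumes "desingularized_with T ks" and "i < length ps"
  shows "removable_at \<sigma> \<delta> ((ps ! i) ^ (ks ! i)) L (degree T - degree L)"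
proof -
  define p where "p = (ps ! i) ^ (ks ! i)"
  define V where "V = (\<Prod>j\<in>{..<length ps} - {i}. (ps ! j) ^ (ks ! j))"
  obtain a b where "a \<noteq> 0" "b \<noteq> 0"
    and data: "normalized_lc T * smult b (factor_prod ks) = smult a (lead_coeff L)"
    using assms(1) by (rule desingularized_withE)
  have "T \<noteq> 0" "in_cont \<sigma> \<delta> L T" using assms(1) unfolding desingularized_with_def by auto
  obtain P where P: "P \<noteq> 0" "ore_mult \<sigma> \<delta> P (emb L) = emb T" "degree T = degree P + degree L"
    using in_cont_cofactor[OF \<open>in_cont \<sigma> \<delta> L T\<close> L_nonzero \<open>T \<noteq> 0\<close>] .
  have "factor_prod ks = p * V"
    unfolding factor_prod_def p_def V_def using assms(2) by (subst prod.remove[of _ i]) auto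
  then have split: "smult a (lead_coeff L) = p * (normalized_lc T * smult b V)"
    using data by (simp add: ac_simps)
  have "primitive p"
    unfolding p_def using primitive_power[OF PID primitive_factor[OF assms(2)]] .
  have "p dvd lead_coeff L"
    using primitive_dvd_smult_cancel[OF PID \<open>primitive p\<close> \<open>a \<noteq> 0\<close>] split by (metis dvd_triv_left)
  moreover have "rel_prime p [:a:]"
    using rel_prime_primitive_const[OF \<open>primitive p\<close> \<open>a \<noteq> 0\<close>] .
  moreover have "smult b V \<noteq> 0"
    using \<open>b \<noteq> 0\<close> factor_prod_nonzero[of ks] \<open>factor_prod ks = p * V\<close> by auto
  moreover have "Fract (spow \<sigma> (- int (degree T - degree L)) (lead_coeff T)) 1
      = Fract [:a:] (smult b V * p) * Fract (lead_coeff L) 1"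
    using split \<open>smult b V \<noteq> 0\<close> \<open>primitive p\<close>
    by (auto simp: spow_minus_nat normalized_lc_def eq_fract primitive_def ac_simps)
  moreover have "degree P = degree T - degree L" using P(3) by simp
  ultimately show ?thesis
    unfolding removable_at_def p_def[symmetric]
    by (intro conjI exI[of _ P] exI[of _ T] exI[of _ "[:a:]"] exI[of _ "smult b V"] P(1,2))
qed

lemma desingularized_with_unique:
  assumes "desingularized_with T ks" "desingularized_with T' ks'"
  shows "ks = ks'"
proof -
  have le: "ks ! i \<le> ks' ! i"
    if "desingularized_with T ks" "desingularized_with T' ks'" "i < length ps" for T T' ks ks' i
  proof (rule ccontr)
    assume "\<not> ks ! i \<le> ks' ! i"
    then have "non_removable \<sigma> \<delta> ((ps ! i) ^ (ks ! i)) L"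
      using that(2,3) unfolding desingularized_with_def by auto
    then show False
      using removable_at_exponent[OF that(1,3)] unfolding non_removable_def by blast
  qed
  from assms have "length ks = length ps" "length ks' = length ps"
    unfolding desingularized_with_def by auto
  with le[OF assms] le[OF assms(2,1)] show ?thesis
    by (intro nth_equalityI) (auto intro: antisym)
qed

lemma normalized_lc_dmul_poly_pow:
  assumes "in_cont \<sigma> \<delta> L T" "T \<noteq> 0"
  shows "normalized_lc ((dmul_poly ^^ j) T) = normalized_lc T"
proof -
  have "degree ((dmul_poly ^^ j) T) - degree L = (degree T - degree L) + j"
    using dmul_poly_pow(1)[OF assms(2)] degree_L_le[OF assms] by simp
  then show ?thesis
    by (simp add: normalized_lc_def dmul_poly_pow(2)[OF assms(2)] funpow_add inv_sigma_pow_sigma_pow)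
qed

lemma desingularized_with_dmul_poly_pow:
  assumes "desingularized_with T ks"
  shows "desingularized_with ((dmul_poly ^^ j) T) ks"
proof -
  have "in_cont \<sigma> \<delta> L T" "T \<noteq> 0" using assms unfolding desingularized_with_def by auto
  moreover have "(dmul_poly ^^ j) T \<noteq> 0"
    using dmul_poly_pow(2)[OF \<open>T \<noteq> 0\<close>, of j] \<open>T \<noteq> 0\<close>
    by (metis leading_coeff_0_iff sigma_pow_inv_sigma_pow inv_sigma_pow_sigma_pow sigma_pow_smult smult_0_left)
  ultimately show ?thesis
    using assms in_cont_dmul_poly_pow
    unfolding desingularized_with_def normalized_lc_dmul_poly_pow[OF \<open>in_cont \<sigma> \<delta> L T\<close> \<open>T \<noteq> 0\<close>]
    by blast
qed

lemma normalized_lc_associated: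
  assumes "desingularized_with T ks" "desingularized_with T' ks"
    and "normalized_lc T = smult c H" "normalized_lc T' = smult c' H'"
    and "primitive H" "primitive H'"
  obtains u where "u dvd 1" "H' = smult u H"
proof -
  obtain a b where "a \<noteq> 0" "b \<noteq> 0"
    and data: "normalized_lc T * smult b (factor_prod ks) = smult a (lead_coeff L)"
    using assms(1) by (rule desingularized_withE)
  obtain a' b' where "a' \<noteq> 0" "b' \<noteq> 0"
    and data': "normalized_lc T' * smult b' (factor_prod ks) = smult a' (lead_coeff L)"
    using assms(2) by (rule desingularized_withE)
  have "c \<noteq> 0" "c' \<noteq> 0"
    using assms(1-4) normalized_lc_nonzero unfolding desingularized_with_def by auto
  have "smult (a' * b * c) H * factor_prod ks = smult (a * b' * c') H' * factor_prod ks"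
    using arg_cong[OF data, of "smult a'"] arg_cong[OF data', of "smult a"] assms(3,4)
    by (simp add: ac_simps mult_smult_left mult_smult_right)
  then have "smult (a' * b * c) H = smult (a * b' * c') H'"
    using factor_prod_nonzero[of ks] by (metis mult_cancel_right)
  moreover have "a' * b * c \<noteq> 0" "a * b' * c' \<noteq> 0"
    using \<open>a \<noteq> 0\<close> \<open>a' \<noteq> 0\<close> \<open>b \<noteq> 0\<close> \<open>b' \<noteq> 0\<close> \<open>c \<noteq> 0\<close> \<open>c' \<noteq> 0\<close> by auto
  ultimately show ?thesis
    using primitive_smult_eq_imp_unit[OF PID assms(5,6)] that by blast
qed

lemma desingularized_with_lincomb:
  assumes T: "desingularized_with T ks" and T': "desingularized_with T' ks"
    and "degree T' = degree T"
    and N: "normalized_lc T = smult c H" and N': "normalized_lc T' = smult c' H"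
    and s: "\<alpha> * c + \<beta> * c' \<noteq> 0"
  defines "S \<equiv> smult [:\<alpha>:] T + smult [:\<beta>:] T'"
  shows "desingularized_with S ks" and "normalized_lc S = smult (\<alpha> * c + \<beta> * c') H"
proof -
  define n where "n = degree T - degree L"
  define G where "G = (\<sigma> ^^ n) H"
  have "in_cont \<sigma> \<delta> L T" "T \<noteq> 0" "in_cont \<sigma> \<delta> L T'" "T' \<noteq> 0"
    using T T' unfolding desingularized_with_def by auto
  then have lc: "lead_coeff T = smult c G" "lead_coeff T' = smult c' G"
    using lead_coeff_conv_normalized_lc[of T] lead_coeff_conv_normalized_lc[of T'] N N'
      \<open>degree T' = degree T\<close>
    by (simp_all add: G_def n_def sigma_pow_smult)
  have "c \<noteq> 0" "H \<noteq> 0" using N normalized_lc_nonzero[OF \<open>T \<noteq> 0\<close>] by auto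
  then have "G \<noteq> 0" unfolding G_def by (metis inv_sigma_pow_sigma_pow inv_sigma_pow_eq_0_iff)
  have "coeff S (degree T) = smult (\<alpha> * c + \<beta> * c') G"
    using lc \<open>degree T' = degree T\<close> by (simp add: S_def smult_add_left mult.commute)
  with s \<open>G \<noteq> 0\<close> have "coeff S (degree T) \<noteq> 0" by simp
  moreover have "degree S \<le> degree T"
    unfolding S_def using \<open>degree T' = degree T\<close>
    by (metis degree_add_le degree_smult_le order_trans)
  ultimately have "degree S = degree T" by (simp add: le_degree antisym)
  with \<open>coeff S (degree T) = _\<close> show NS: "normalized_lc S = smult (\<alpha> * c + \<beta> * c') H"
    by (simp add: normalized_lc_def n_def[symmetric] G_def inv_sigma_pow_smult inv_sigma_pow_sigma_pow)
  obtain a b where "b \<noteq> 0" and data: "normalized_lc T * smult b (factor_prod ks) = smult a (lead_coeff L)"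
    using T by (rule desingularized_withE)
  have "normalized_lc S * smult (c * b) (factor_prod ks) = smult ((\<alpha> * c + \<beta> * c') * a) (lead_coeff L)"
    using arg_cong[OF data, of "smult (\<alpha> * c + \<beta> * c')"] N NS
    by (simp add: ac_simps mult_smult_left mult_smult_right)
  moreover have "c * b \<noteq> 0" using \<open>c \<noteq> 0\<close> \<open>b \<noteq> 0\<close> by simp
  moreover have "S \<noteq> 0" using \<open>coeff S (degree T) \<noteq> 0\<close> by auto
  moreover have "in_cont \<sigma> \<delta> L S"
    unfolding S_def using \<open>in_cont \<sigma> \<delta> L T\<close> \<open>in_cont \<sigma> \<delta> L T'\<close> by (intro in_cont_add in_cont_smult)
  ultimately show "desingularized_with S ks"
    using T unfolding desingularized_with_def by blast
qed

lemma lincomb_in_desing_content_set: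
  assumes D: "desingularized \<sigma> \<delta> ps L T" "primitive g" "lead_coeff T = smult c g"
    and D': "desingularized \<sigma> \<delta> ps L T'" "primitive g'" "lead_coeff T' = smult c' g'"
  shows "\<alpha> * c + \<beta> * c' \<in> desing_content_set \<sigma> \<delta> ps L"
proof (cases "\<alpha> * c + \<beta> * c' = 0")
  case False
  obtain ks ks' where ks: "desingularized_with T ks" and ks': "desingularized_with T' ks'"
    using D(1) D'(1) unfolding desingularized_iff by blast
  with desingularized_with_unique have "ks' = ks" by blast
  define H where "H = (inv \<sigma> ^^ (degree T - degree L)) g"
  define H' where "H' = (inv \<sigma> ^^ (degree T' - degree L)) g'"
  have N: "normalized_lc T = smult c H" and N': "normalized_lc T' = smult c' H'"
    by (simp_all add: normalized_lc_def H_def H'_def D(3) D'(3) inv_sigma_pow_smult)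
  have "primitive H" "primitive H'"
    unfolding H_def H'_def using D(2) D'(2) by (simp_all add: primitive_inv_sigma_pow)
  obtain u where "u dvd 1" "H' = smult u H"
    using normalized_lc_associated[OF ks ks'[unfolded \<open>ks' = ks\<close>] N N'] \<open>primitive H\<close> \<open>primitive H'\<close> .
  then obtain v where "u * v = 1" by (metis dvdE)
  then have unit_cancel: "\<alpha> * c + v * \<beta> * (c' * u) = \<alpha> * c + \<beta> * c'"
    by (metis mult.assoc mult.commute mult_1_right)
  define k where "k = max (degree T) (degree T')"
  define S where "S = (dmul_poly ^^ (k - degree T)) T"
  define S' where "S' = (dmul_poly ^^ (k - degree T')) T'"
  have "in_cont \<sigma> \<delta> L T" "T \<noteq> 0" "in_cont \<sigma> \<delta> L T'" "T' \<noteq> 0"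
    using ks ks' unfolding desingularized_with_def by auto
  then have "degree S = k" "degree S' = k"
    by (simp_all add: S_def S'_def k_def dmul_poly_pow)
  have "desingularized_with S ks" "desingularized_with S' ks"
    unfolding S_def S'_def using ks ks' \<open>ks' = ks\<close> by (simp_all add: desingularized_with_dmul_poly_pow)
  moreover have "normalized_lc S = smult c H" "normalized_lc S' = smult (c' * u) H"
    using N N' \<open>H' = smult u H\<close> \<open>in_cont \<sigma> \<delta> L T\<close> \<open>T \<noteq> 0\<close> \<open>in_cont \<sigma> \<delta> L T'\<close> \<open>T' \<noteq> 0\<close>
    by (simp_all add: S_def S'_def normalized_lc_dmul_poly_pow)
  moreover note lincomb = desingularized_with_lincomb[OF calculation(1,2) _ calculation(3,4), of \<alpha> "v * \<beta>"]
  define R where "R = smult [:\<alpha>:] S + smult [:v * \<beta>:] S'"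
  have R: "desingularized_with R ks" "normalized_lc R = smult (\<alpha> * c + \<beta> * c') H"
    using lincomb[unfolded unit_cancel] \<open>degree S = k\<close> \<open>degree S' = k\<close> False
    unfolding R_def by simp_all
  then have "lead_coeff R = smult (\<alpha> * c + \<beta> * c') ((\<sigma> ^^ (degree R - degree L)) H)"
    using lead_coeff_conv_normalized_lc[of R] unfolding desingularized_with_def by (simp add: sigma_pow_smult)
  moreover have "primitive ((\<sigma> ^^ (degree R - degree L)) H)"
    using \<open>primitive H\<close> by (rule primitive_sigma_pow)
  moreover have "desingularized \<sigma> \<delta> ps L R" using R(1) desingularized_iff by blast
  ultimately show ?thesis unfolding desing_content_set_def by blast
qed (simp add: desing_content_set_def)

lemma is_ideal_desing_content_set: "is_ideal (desing_content_set \<sigma> \<delta> ps L)"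
  unfolding is_ideal_def
proof (intro conjI ballI allI)
  show "0 \<in> desing_content_set \<sigma> \<delta> ps L" unfolding desing_content_set_def by simp
next
  fix a b assume a: "a \<in> desing_content_set \<sigma> \<delta> ps L" and b: "b \<in> desing_content_set \<sigma> \<delta> ps L"
  show "a + b \<in> desing_content_set \<sigma> \<delta> ps L"
  proof (cases "a = 0 \<or> b = 0")
    case False
    then obtain T g T' g' where "desingularized \<sigma> \<delta> ps L T" "primitive g" "lead_coeff T = smult a g"
      "desingularized \<sigma> \<delta> ps L T'" "primitive g'" "lead_coeff T' = smult b g'"
      using a b unfolding desing_content_set_def by auto
    from lincomb_in_desing_content_set[OF this, of 1 1] show ?thesis by simp
  qed (use a b in auto)
next
  fix a r assume a: "a \<in> desing_content_set \<sigma> \<delta> ps L"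
  show "r * a \<in> desing_content_set \<sigma> \<delta> ps L"
  proof (cases "a = 0")
    case False
    then obtain T g where "desingularized \<sigma> \<delta> ps L T" "primitive g" "lead_coeff T = smult a g"
      using a unfolding desing_content_set_def by auto
    from lincomb_in_desing_content_set[OF this this, of r 0] show ?thesis by simp
  qed (simp add: desing_content_set_def)
qed

end

theorem mainTheorem14:
  fixes \<gamma> \<tau> c :: "'a::idom"
    and \<sigma> \<delta> :: "'a poly \<Rightarrow> 'a poly"
    and L :: "'a poly poly"
    and ps :: "'a poly list" and es :: "nat list"
  assumes PID: "is_PID_type TYPE('a)"
    and unit: "\<gamma> dvd 1"
    and sigma: "\<And>p. \<sigma> p = pcompose p [:\<tau>, \<gamma>:]"
    and d_add: "\<And>p q. \<delta> (p + q) = \<delta> p + \<delta> q"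
    and d_lin: "\<And>a p. \<delta> (smult a p) = smult a (\<delta> p)"
    and d_mult: "\<And>p q. \<delta> (p * q) = \<sigma> p * \<delta> q + \<delta> p * q"
    and d_x: "degree (\<delta> [:0, 1:]) \<le> 1"
    and ord: "degree L > 0"
    and len: "length es = length ps"
    and fac: "lead_coeff L = smult c (\<Prod>i<length ps. (ps ! i) ^ (es ! i))"
    and irr: "\<And>i. i < length ps \<Longrightarrow> degree (ps ! i) > 0 \<and> irreducible (ps ! i)"
    and cop: "\<And>i j. i < length ps \<Longrightarrow> j < length ps \<Longrightarrow> i \<noteq> j \<Longrightarrow> rel_prime (ps ! i) (ps ! j)"
  shows "is_ideal (desing_content_set \<sigma> \<delta> ps L)"
proof -
  interpret desingularization \<gamma> \<tau> \<sigma> \<delta> L ps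
  proof
    show "L \<noteq> 0" using ord by auto
    show "primitive (ps ! i)" if "i < length ps" for i
      using irr[OF that] irreducible_imp_primitive by blast
  qed (fact unit sigma d_add d_mult PID)+
  show ?thesis by (rule is_ideal_desing_content_set)
qed

end
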